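(* Let $(\mathfrak{A},\mathfrak{A}_0)$ be a CQ*-algebra as described in the context, and let $\omega$ be a $\|\cdot\|$-continuous positive linear functional on $\mathfrak{A}_0$ with GNS construction $(\pi_\omega,\lambda_\omega,\mathcal{H}_\omega)$. Then there exist a map $\pi_{\overline{\omega}}$ and a linear map $\lambda_{\overline{\omega}}$ such that: (1) $\pi_{\overline{\omega}}$ is a $*$-representation of the quasi *-algebra $(\mathfrak{A},\mathfrak{A}_0)$ into $\mathcal{L}^\dagger(\lambda_\omega(\mathfrak{A}_0), v(\lambda_\omega(\mathfrak{A}_0)))$ (in the Hilbert space $\mathcal{H}_{\overline{\omega}}:=\mathcal{H}_\omega$, with domain $\mathcal{D}(\pi_{\overline{\omega}})=\lambda_\omega(\mathfrak{A}_0)$), which extends $\pi_\omega$; (2) $\lambda_{\overline{\omega}}$ is a linear map from $\mathfrak{A}$ into $v(\lambda_\omega(\mathfrak{A}_0))$ which extends $\lambda_\omega$ and satisfies $\lambda_{\overline{\omega}}(XB)=\pi_{\overline{\omega}}(X)\lambda_\omega(B)$ for all $X\in\mathfrak{A}$ and $B\in\mathfrak{A}_0$.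
   Context: Let $\mathfrak{A}_0$ be a unital C*-algebra with C*-norm $\|\cdot\|_0$ and unit $I$, and let $\|\cdot\|$ be another norm on $\mathfrak{A}_0$ such that $\|A\|\le\|A\|_0$, $\|AB\|\le\|A\|\,\|B\|_0$ and $\|A^*\|=\|A\|$ for all $A,B\in\mathfrak{A}_0$. Let $\mathfrak{A}$ be the completion of $(\mathfrak{A}_0,\|\cdot\|)$, with extended norm still denoted $\|\cdot\|$. For $X\in\mathfrak{A}$, $A\in\mathfrak{A}_0$ and any sequence $A_n\in\mathfrak{A}_0$ with $\|A_n-X\|\to0$, define $XA:=\lim A_nA$, $AX:=\lim AA_n$, $X^*:=\lim A_n^*$ (limits in $\|\cdot\|$); these are well defined and make $(\mathfrak{A},\mathfrak{A}_0)$ a quasi *-algebra (i.e. $\mathfrak{A}$ is an $\mathfrak{A}_0$-bimodule with involution extending that of $\mathfrak{A}_0$, $(XA)^*=A^*X^*$, and $(AX)B=A(XB)$ etc.), called a CQ*-algebra. A linear functional $\omega$ on $\mathfrak{A}_0$ is a $\|\cdot\|$-continuous positive linear functional if $\omega(A^*A)\ge0$ for all $A$ and there is $\gamma>0$ with $|\omega(A)|\le\gamma\|A\|$ for all $A\in\mathfrak{A}_0$. $(\pi_\omega,\lambda_\omega,\mathcal{H}_\omega)$ denotes the usual GNS construction of $\omega$ on the C*-algebra $\mathfrak{A}_0$: $\lambda_\omega:\mathfrak{A}_0\to\mathcal{H}_\omega$ is linear with dense range, $(\lambda_\omega(A)|\lambda_\omega(B))=\omega(B^*A)$, and $\pi_\omega(A)\lambda_\omega(B)=\lambda_\omega(AB)$.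 Unbounded vectors: for a subspace $\mathcal{D}$ of a Hilbert space $\mathcal{H}$, $v(\mathcal{D})$ is the vector space of all conjugate-linear functionals on $\mathcal{D}$ (value of $v$ at $\xi$ written $\langle v,\xi\rangle$); each $\xi\in\mathcal{H}$ is identified with $\eta\mapsto(\xi|\eta)$. $\mathcal{L}^\dagger(\mathcal{D})$ is the *-algebra of linear operators $A$ on $\mathcal{D}$ having an adjoint $A^\dagger$ that maps $\mathcal{D}$ into $\mathcal{D}$. $\mathcal{L}^\dagger(\mathcal{D},v(\mathcal{D}))$ is the set of linear maps $\mathcal{D}\to v(\mathcal{D})$; it is a quasi *-algebra over $\mathcal{L}^\dagger(\mathcal{D})$ with $\langle AX\xi,\eta\rangle=\langle X\xi,A^\dagger\eta\rangle$, $\langle XA\xi,\eta\rangle=\langle X(A\xi),\eta\rangle$, $\langle X^\dagger\xi,\eta\rangle=\overline{\langle X\eta,\xi\rangle}$. A $*$-representation of a quasi *-algebra $(\mathscr{A},\mathscr{A}_0)$ into $\mathcal{L}^\dagger(\mathcal{D},v(\mathcal{D}))$ is a linear map $\pi$ with $\pi(ax)=\pi(a)\pi(x)$, $\pi(xa)=\pi(x)\pi(a)$, $\pi(x^* )=\pi(x)^\dagger$ for all $x\in\mathscr{A}$, $a\in\mathscr{A}_0$ (with $\pi(\mathscr{A}_0)\subset\mathcal{L}^\dagger(\mathcal{D})$). *)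

theory Defs
  imports "HOL-Analysis.Analysis"
begin

text \<open>HOL has no class of complex vector spaces, so complex scalar multiplication
  is an explicit parameter sc compatible with the real scaling of the type.
  The type's own norm is the C*-norm.\<close>

definition complex_scaling :: "(complex \<Rightarrow> 'v::real_vector \<Rightarrow> 'v) \<Rightarrow> bool" where
  "complex_scaling sc \<longleftrightarrow>
     (\<forall>c x y. sc c (x + y) = sc c x + sc c y) \<and>
     (\<forall>c d x. sc (c + d) x = sc c x + sc d x) \<and>
     (\<forall>c d x. sc (c * d) x = sc c (sc d x)) \<and>
     (\<forall>r x. sc (complex_of_real r) x = r *\<^sub>R x)"

definition cstar_algebra ::
  "(complex \<Rightarrow> 'a::{real_normed_algebra_1,banach} \<Rightarrow> 'a) \<Rightarrow> ('a \<Rightarrow> 'a) \<Rightarrow> bool" where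
  "cstar_algebra sc st \<longleftrightarrow>
     complex_scaling sc \<and>
     (\<forall>c a b. sc c (a * b) = sc c a * b \<and> sc c (a * b) = a * sc c b) \<and>
     (\<forall>c a. norm (sc c a) = cmod c * norm a) \<and>
     (\<forall>a. st (st a) = a) \<and>
     (\<forall>a b. st (a + b) = st a + st b) \<and>
     (\<forall>c a. st (sc c a) = sc (cnj c) (st a)) \<and>
     (\<forall>a b. st (a * b) = st b * st a) \<and>
     (\<forall>a. norm (st a * a) = (norm a)\<^sup>2)"

definition cq_norm ::
  "(complex \<Rightarrow> 'a::{real_normed_algebra_1,banach} \<Rightarrow> 'a) \<Rightarrow> ('a \<Rightarrow> 'a) \<Rightarrow> ('a \<Rightarrow> real) \<Rightarrow> bool" where
  "cq_norm sc st nrm \<longleftrightarrow>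
     (\<forall>a. nrm a = 0 \<longleftrightarrow> a = 0) \<and>
     (\<forall>a b. nrm (a + b) \<le> nrm a + nrm b) \<and>
     (\<forall>c a. nrm (sc c a) = cmod c * nrm a) \<and>
     (\<forall>a. nrm a \<le> norm a) \<and>
     (\<forall>a b. nrm (a * b) \<le> nrm a * norm b) \<and>
     (\<forall>a. nrm (st a) = nrm a)"

definition is_completion :: "('a::real_vector \<Rightarrow> 'x::banach) \<Rightarrow> ('a \<Rightarrow> real) \<Rightarrow> bool" where
  "is_completion j nrm \<longleftrightarrow>
     (\<forall>a b. j (a + b) = j a + j b) \<and>
     (\<forall>r a. j (r *\<^sub>R a) = r *\<^sub>R j a) \<and>
     (\<forall>a. norm (j a) = nrm a) \<and>
     closure (range j) = UNIV"

definition ext_op :: "('a \<Rightarrow> 'x::topological_space) \<Rightarrow> ('a \<Rightarrow> 'a) \<Rightarrow> 'x \<Rightarrow> 'x" where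
  "ext_op j f X = (THE Y. \<forall>A. (\<lambda>n. j (A n)) \<longlonglongrightarrow> X \<longrightarrow> (\<lambda>n. j (f (A n))) \<longlonglongrightarrow> Y)"

definition cq_rmul :: "('a::times \<Rightarrow> 'x::topological_space) \<Rightarrow> 'x \<Rightarrow> 'a \<Rightarrow> 'x" where
  "cq_rmul j X A = ext_op j (\<lambda>B. B * A) X"

definition cq_lmul :: "('a::times \<Rightarrow> 'x::topological_space) \<Rightarrow> 'a \<Rightarrow> 'x \<Rightarrow> 'x" where
  "cq_lmul j A X = ext_op j (\<lambda>B. A * B) X"

definition cq_star :: "('a \<Rightarrow> 'x::topological_space) \<Rightarrow> ('a \<Rightarrow> 'a) \<Rightarrow> 'x \<Rightarrow> 'x" where
  "cq_star j st X = ext_op j st X"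

definition cq_scale :: "('a \<Rightarrow> 'x::topological_space) \<Rightarrow> (complex \<Rightarrow> 'a \<Rightarrow> 'a) \<Rightarrow> complex \<Rightarrow> 'x \<Rightarrow> 'x" where
  "cq_scale j sc c X = ext_op j (sc c) X"

definition cont_pos_functional ::
  "(complex \<Rightarrow> 'a::{real_normed_algebra_1,banach} \<Rightarrow> 'a) \<Rightarrow> ('a \<Rightarrow> 'a) \<Rightarrow> ('a \<Rightarrow> real)
    \<Rightarrow> ('a \<Rightarrow> complex) \<Rightarrow> bool" where
  "cont_pos_functional sc st nrm \<omega> \<longleftrightarrow>
     (\<forall>a b. \<omega> (a + b) = \<omega> a + \<omega> b) \<and>
     (\<forall>c a. \<omega> (sc c a) = c * \<omega> a) \<and>
     (\<forall>a. Im (\<omega> (st a * a)) = 0 \<and> Re (\<omega> (st a * a)) \<ge> 0) \<and>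
     (\<exists>\<gamma>>0. \<forall>a. cmod (\<omega> a) \<le> \<gamma> * nrm a)"

definition complex_hilbert ::
  "(complex \<Rightarrow> 'h::{real_normed_vector,banach} \<Rightarrow> 'h) \<Rightarrow> ('h \<Rightarrow> 'h \<Rightarrow> complex) \<Rightarrow> bool" where
  "complex_hilbert shc ip \<longleftrightarrow>
     complex_scaling shc \<and>
     (\<forall>x y z. ip (x + y) z = ip x z + ip y z) \<and>
     (\<forall>c x y. ip (shc c x) y = c * ip x y) \<and>
     (\<forall>x y. ip y x = cnj (ip x y)) \<and>
     (\<forall>x. ip x x = complex_of_real ((norm x)\<^sup>2))"

text \<open>GNS construction of \<omega>: (piw, \<lambda>\<omega>, H\<omega>).\<close>

definition gns ::
  "(complex \<Rightarrow> 'a::{real_normed_algebra_1,banach} \<Rightarrow> 'a) \<Rightarrow> ('a \<Rightarrow> 'a) \<Rightarrow> ('a \<Rightarrow> complex)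
   \<Rightarrow> (complex \<Rightarrow> 'h::{real_normed_vector,banach} \<Rightarrow> 'h) \<Rightarrow> ('h \<Rightarrow> 'h \<Rightarrow> complex)
   \<Rightarrow> ('a \<Rightarrow> 'h) \<Rightarrow> ('a \<Rightarrow> 'h \<Rightarrow> 'h) \<Rightarrow> bool" where
  "gns sc st \<omega> shc ip lam piw \<longleftrightarrow>
     complex_hilbert shc ip \<and>
     (\<forall>a b. lam (a + b) = lam a + lam b) \<and>
     (\<forall>c a. lam (sc c a) = shc c (lam a)) \<and>
     closure (range lam) = UNIV \<and>
     (\<forall>a b. ip (lam a) (lam b) = \<omega> (st b * a)) \<and>
     (\<forall>a. bounded_linear (piw a) \<and> (\<forall>c x. piw a (shc c x) = shc c (piw a x))) \<and>
     (\<forall>a b. piw a (lam b) = lam (a * b))"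

text \<open>Elements of v(D) are represented by functions 'h \<Rightarrow> complex, of which only the
  values on D matter; elements of L\<dagger>(D,v(D)) by X :: 'h \<Rightarrow> 'h \<Rightarrow> complex with
  X \<xi> \<eta> = \<langle>X\<xi>, \<eta>\<rangle>.\<close>

definition conj_lin_on :: "(complex \<Rightarrow> 'h::real_vector \<Rightarrow> 'h) \<Rightarrow> 'h set \<Rightarrow> ('h \<Rightarrow> complex) \<Rightarrow> bool" where
  "conj_lin_on shc D f \<longleftrightarrow>
     (\<forall>x\<in>D. \<forall>y\<in>D. f (x + y) = f x + f y) \<and> (\<forall>c. \<forall>x\<in>D. f (shc c x) = cnj c * f x)"

definition lin_op_on :: "(complex \<Rightarrow> 'h::real_vector \<Rightarrow> 'h) \<Rightarrow> 'h set \<Rightarrow> ('h \<Rightarrow> 'h) \<Rightarrow> bool" where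
  "lin_op_on shc D T \<longleftrightarrow>
     (\<forall>x\<in>D. \<forall>y\<in>D. T (x + y) = T x + T y) \<and> (\<forall>c. \<forall>x\<in>D. T (shc c x) = shc c (T x))"

definition is_adj_on :: "('h \<Rightarrow> 'h \<Rightarrow> complex) \<Rightarrow> 'h set \<Rightarrow> ('h \<Rightarrow> 'h) \<Rightarrow> ('h \<Rightarrow> 'h) \<Rightarrow> bool" where
  "is_adj_on ip D T S \<longleftrightarrow> S ` D \<subseteq> D \<and> (\<forall>\<xi>\<in>D. \<forall>\<eta>\<in>D. ip (T \<xi>) \<eta> = ip \<xi> (S \<eta>))"

definition Ldag :: "(complex \<Rightarrow> 'h::real_vector \<Rightarrow> 'h) \<Rightarrow> ('h \<Rightarrow> 'h \<Rightarrow> complex) \<Rightarrow> 'h set \<Rightarrow> ('h \<Rightarrow> 'h) \<Rightarrow> bool" where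
  "Ldag shc ip D T \<longleftrightarrow> T ` D \<subseteq> D \<and> lin_op_on shc D T \<and> (\<exists>S. is_adj_on ip D T S)"

definition dag_op :: "('h \<Rightarrow> 'h \<Rightarrow> complex) \<Rightarrow> 'h set \<Rightarrow> ('h \<Rightarrow> 'h) \<Rightarrow> ('h \<Rightarrow> 'h)" where
  "dag_op ip D T = (SOME S. is_adj_on ip D T S)"

definition LDv :: "(complex \<Rightarrow> 'h::real_vector \<Rightarrow> 'h) \<Rightarrow> 'h set \<Rightarrow> ('h \<Rightarrow> 'h \<Rightarrow> complex) \<Rightarrow> bool" where
  "LDv shc D X \<longleftrightarrow>
     (\<forall>\<xi>\<in>D. conj_lin_on shc D (X \<xi>)) \<and>
     (\<forall>\<xi>\<in>D. \<forall>\<xi>'\<in>D. \<forall>\<eta>\<in>D. X (\<xi> + \<xi>') \<eta> = X \<xi> \<eta> + X \<xi>' \<eta>) \<and>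
     (\<forall>c. \<forall>\<xi>\<in>D. \<forall>\<eta>\<in>D. X (shc c \<xi>) \<eta> = c * X \<xi> \<eta>)"

definition LDv_lmul :: "('h \<Rightarrow> 'h \<Rightarrow> complex) \<Rightarrow> 'h set \<Rightarrow> ('h \<Rightarrow> 'h) \<Rightarrow> ('h \<Rightarrow> 'h \<Rightarrow> complex) \<Rightarrow> 'h \<Rightarrow> 'h \<Rightarrow> complex" where
  "LDv_lmul ip D T X = (\<lambda>\<xi> \<eta>. X \<xi> (dag_op ip D T \<eta>))"

definition LDv_rmul :: "('h \<Rightarrow> 'h \<Rightarrow> complex) \<Rightarrow> ('h \<Rightarrow> 'h) \<Rightarrow> 'h \<Rightarrow> 'h \<Rightarrow> complex" where
  "LDv_rmul X T = (\<lambda>\<xi> \<eta>. X (T \<xi>) \<eta>)"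

definition LDv_dag :: "('h \<Rightarrow> 'h \<Rightarrow> complex) \<Rightarrow> 'h \<Rightarrow> 'h \<Rightarrow> complex" where
  "LDv_dag X = (\<lambda>\<xi> \<eta>. cnj (X \<eta> \<xi>))"

definition op_to_LDv :: "('h \<Rightarrow> 'h \<Rightarrow> complex) \<Rightarrow> ('h \<Rightarrow> 'h) \<Rightarrow> 'h \<Rightarrow> 'h \<Rightarrow> complex" where
  "op_to_LDv ip T = (\<lambda>\<xi> \<eta>. ip (T \<xi>) \<eta>)"

definition eq_on_D :: "'h set \<Rightarrow> ('h \<Rightarrow> 'h \<Rightarrow> complex) \<Rightarrow> ('h \<Rightarrow> 'h \<Rightarrow> complex) \<Rightarrow> bool" where
  "eq_on_D D X Y \<longleftrightarrow> (\<forall>\<xi>\<in>D. \<forall>\<eta>\<in>D. X \<xi> \<eta> = Y \<xi> \<eta>)"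

definition cq_star_rep ::
  "(complex \<Rightarrow> 'a::{real_normed_algebra_1,banach} \<Rightarrow> 'a) \<Rightarrow> ('a \<Rightarrow> 'a) \<Rightarrow> ('a \<Rightarrow> 'x::banach)
   \<Rightarrow> (complex \<Rightarrow> 'h::{real_normed_vector,banach} \<Rightarrow> 'h) \<Rightarrow> ('h \<Rightarrow> 'h \<Rightarrow> complex) \<Rightarrow> 'h set
   \<Rightarrow> ('a \<Rightarrow> 'h \<Rightarrow> 'h) \<Rightarrow> ('x \<Rightarrow> 'h \<Rightarrow> 'h \<Rightarrow> complex) \<Rightarrow> bool" where
  "cq_star_rep sc st j shc ip D pi0 P \<longleftrightarrow>
     (\<forall>X. LDv shc D (P X)) \<and>
     (\<forall>X Y. eq_on_D D (P (X + Y)) (\<lambda>\<xi> \<eta>. P X \<xi> \<eta> + P Y \<xi> \<eta>)) \<and>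
     (\<forall>c X. eq_on_D D (P (cq_scale j sc c X)) (\<lambda>\<xi> \<eta>. c * P X \<xi> \<eta>)) \<and>
     (\<forall>a. Ldag shc ip D (pi0 a) \<and> eq_on_D D (P (j a)) (op_to_LDv ip (pi0 a))) \<and>
     (\<forall>a X. eq_on_D D (P (cq_lmul j a X)) (LDv_lmul ip D (pi0 a) (P X))) \<and>
     (\<forall>a X. eq_on_D D (P (cq_rmul j X a)) (LDv_rmul (P X) (pi0 a))) \<and>
     (\<forall>X. eq_on_D D (P (cq_star j st X)) (LDv_dag (P X)))"

end

theory Submission
  imports Defs
begin

(* The GNS matrix coefficients a \<mapsto> <\<pi>(a)\<lambda>(b), \<lambda>(c)> = \<omega>(c* a b) are Lipschitz for the
   second norm, because |\<omega>(c* a b)| \<le> \<gamma> \<parallel>c* a b\<parallel> \<le> \<gamma> \<parallel>c\<parallel>_0 \<parallel>a\<parallel> \<parallel>b\<parallel>_0. So they extend by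
   continuity to the completion, and these extended coefficients define \<pi>(X) as a sesquilinear
   form on \<lambda>(A0). Each identity required of a *-representation holds on A0 and passes to the
   limit along an approximating sequence; the vector \<lambda>(X) is \<pi>(X)\<lambda>(1). *)

definition ext_fun :: "('a \<Rightarrow> 'x::topological_space) \<Rightarrow> ('a \<Rightarrow> 'b::topological_space) \<Rightarrow> 'x \<Rightarrow> 'b" where
  "ext_fun j g X = (THE y. \<forall>A. (\<lambda>n. j (A n)) \<longlonglongrightarrow> X \<longrightarrow> (\<lambda>n. g (A n)) \<longlonglongrightarrow> y)"

lemma ext_op_eq_ext_fun: "ext_op j f = ext_fun j (\<lambda>a. j (f a))"
  by (simp add: fun_eq_iff ext_op_def ext_fun_def)

lemma dense_range_tendsto_seq:
  fixes j :: "'a \<Rightarrow> 'x::first_countable_topology"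
  assumes "closure (range j) = UNIV"
  obtains A where "(\<lambda>n. j (A n)) \<longlonglongrightarrow> X"
proof -
  have "X \<in> closure (range j)" using assms by simp
  then obtain x where "\<forall>n. x n \<in> range j" "x \<longlonglongrightarrow> X" by (auto simp: closure_sequential)
  moreover from this(1) have "\<forall>n. x n = j (inv j (x n))" by (simp add: f_inv_into_f)
  ultimately show ?thesis using that[of "\<lambda>n. inv j (x n)"] by simp
qed

lemma Cauchy_lipschitz_transfer:
  fixes f :: "nat \<Rightarrow> 'x::real_normed_vector" and g :: "nat \<Rightarrow> 'b::real_normed_vector"
  assumes lip: "\<And>m n. norm (g m - g n) \<le> K * norm (f m - f n)" and "Cauchy f"
  shows "Cauchy g"
proof (rule CauchyI)
  fix e :: real assume "e > 0"
  then have "e / (\<bar>K\<bar> + 1) > 0" by simp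
  with \<open>Cauchy f\<close> obtain M where M: "\<forall>m\<ge>M. \<forall>n\<ge>M. norm (f m - f n) < e / (\<bar>K\<bar> + 1)"
    by (blast dest: CauchyD)
  have "norm (g m - g n) < e" if "m \<ge> M" "n \<ge> M" for m n
  proof -
    have "K * norm (f m - f n) \<le> \<bar>K\<bar> * norm (f m - f n)"
      by (intro mult_right_mono) auto
    with lip have "norm (g m - g n) \<le> \<bar>K\<bar> * norm (f m - f n)"
      by (rule order_trans)
    also have "\<dots> \<le> \<bar>K\<bar> * (e / (\<bar>K\<bar> + 1))"
      using M that by (intro mult_left_mono) (auto simp: less_imp_le)
    also have "\<dots> < e"
      using \<open>e > 0\<close> by (simp add: field_simps)
    finally show ?thesis .
  qed
  then show "\<exists>M. \<forall>m\<ge>M. \<forall>n\<ge>M. norm (g m - g n) < e" by blast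
qed

lemma ext_fun_tendsto:
  fixes j :: "'a \<Rightarrow> 'x::real_normed_vector" and g :: "'a \<Rightarrow> 'b::banach"
  assumes lip: "\<And>a b. norm (g a - g b) \<le> K * norm (j a - j b)"
    and A: "(\<lambda>n. j (A n)) \<longlonglongrightarrow> X"
  shows "(\<lambda>n. g (A n)) \<longlonglongrightarrow> ext_fun j g X"
proof -
  have limit_indep: "(\<lambda>n. g (B n)) \<longlonglongrightarrow> y"
    if gA: "(\<lambda>n. g (A n)) \<longlonglongrightarrow> y" and B: "(\<lambda>n. j (B n)) \<longlonglongrightarrow> X" for B y
  proof -
    have "(\<lambda>n. j (B n) - j (A n)) \<longlonglongrightarrow> 0"
      using tendsto_diff[OF B A] by simp
    then have "(\<lambda>n. K * norm (j (B n) - j (A n))) \<longlonglongrightarrow> 0"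
      by (intro tendsto_mult_right_zero tendsto_norm_zero)
    then have "(\<lambda>n. g (B n) - g (A n)) \<longlonglongrightarrow> 0"
      by (rule Lim_null_comparison[OF always_eventually, OF allI, OF lip])
    then show ?thesis by (rule Lim_transform[OF gA])
  qed
  have "Cauchy (\<lambda>n. g (A n))"
    using lip LIMSEQ_imp_Cauchy[OF A] by (rule Cauchy_lipschitz_transfer)
  then obtain y where y: "(\<lambda>n. g (A n)) \<longlonglongrightarrow> y"
    unfolding Cauchy_convergent_iff convergent_def by blast
  have "ext_fun j g X = y"
    unfolding ext_fun_def
  proof (rule the_equality)
    show "\<forall>B. (\<lambda>n. j (B n)) \<longlonglongrightarrow> X \<longrightarrow> (\<lambda>n. g (B n)) \<longlonglongrightarrow> y"
      using limit_indep[OF y] by blast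
    show "y' = y" if "\<forall>B. (\<lambda>n. j (B n)) \<longlonglongrightarrow> X \<longrightarrow> (\<lambda>n. g (B n)) \<longlonglongrightarrow> y'" for y'
      using that A y by (blast intro: LIMSEQ_unique)
  qed
  with y show ?thesis by simp
qed

lemma is_adj_on_dag_op: "is_adj_on ip D T S \<Longrightarrow> is_adj_on ip D T (dag_op ip D T)"
  unfolding dag_op_def by (rule someI[where P = "is_adj_on ip D T"])

lemma complex_hilbert_ip_add_right:
  "complex_hilbert shc ip \<Longrightarrow> ip x (y + z) = ip x y + ip x z"
  unfolding complex_hilbert_def by (metis complex_cnj_add)

lemma complex_hilbert_ip_scale_right:
  "complex_hilbert shc ip \<Longrightarrow> ip x (shc c y) = cnj c * ip x y"
  unfolding complex_hilbert_def by (metis complex_cnj_mult)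

locale cq_gns =
  fixes sc :: "complex \<Rightarrow> 'a::{real_normed_algebra_1,banach} \<Rightarrow> 'a"
    and st :: "'a \<Rightarrow> 'a"
    and nrm :: "'a \<Rightarrow> real"
    and j :: "'a \<Rightarrow> 'x::banach"
    and \<omega> :: "'a \<Rightarrow> complex"
    and shc :: "complex \<Rightarrow> 'h::{real_normed_vector,banach} \<Rightarrow> 'h"
    and ip :: "'h \<Rightarrow> 'h \<Rightarrow> complex"
    and lam :: "'a \<Rightarrow> 'h"
    and piw :: "'a \<Rightarrow> 'h \<Rightarrow> 'h"
  assumes cstar: "cstar_algebra sc st"
    and second_norm: "cq_norm sc st nrm"
    and completion: "is_completion j nrm"
    and functional: "cont_pos_functional sc st nrm \<omega>"
    and gns_triple: "gns sc st \<omega> shc ip lam piw"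
begin

lemma st_st: "st (st a) = a"
  and st_mult: "st (a * b) = st b * st a"
  and sc_mult_left: "sc c (a * b) = sc c a * b"
  using cstar unfolding cstar_algebra_def by blast+

lemma additive_st: "Modules.additive st"
  using cstar unfolding cstar_algebra_def Modules.additive_def by blast

lemma additive_sc: "Modules.additive (sc c)"
  using cstar unfolding cstar_algebra_def complex_scaling_def Modules.additive_def by meson

lemma nrm_sc: "nrm (sc c a) = cmod c * nrm a"
  and nrm_st: "nrm (st a) = nrm a"
  and nrm_mult_right_le: "nrm (a * b) \<le> nrm a * norm b"
  using second_norm unfolding cq_norm_def by blast+

lemma nrm_mult_left_le: "nrm (a * b) \<le> norm (st a) * nrm b"
proof -
  have "nrm (a * b) = nrm (st b * st a)" by (metis nrm_st st_mult)
  also have "\<dots> \<le> nrm b * norm (st a)" by (metis nrm_mult_right_le nrm_st)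
  finally show ?thesis by (simp add: mult.commute)
qed

lemma additive_j: "Modules.additive j"
  and j_dense: "closure (range j) = UNIV"
  and norm_j: "norm (j a) = nrm a"
  using completion unfolding is_completion_def Modules.additive_def by blast+

lemma norm_j_diff: "norm (j a - j b) = nrm (a - b)"
  by (simp add: additive.diff[OF additive_j, symmetric] norm_j)

lemma approximating_seq:
  obtains A where "(\<lambda>n. j (A n)) \<longlonglongrightarrow> X"
  using j_dense by (rule dense_range_tendsto_seq)

lemma additive_\<omega>: "Modules.additive \<omega>"
  using functional unfolding cont_pos_functional_def Modules.additive_def by blast

lemma \<omega>_bounded: obtains \<gamma> where "\<gamma> > 0" "\<And>a. cmod (\<omega> a) \<le> \<gamma> * nrm a"
  using functional unfolding cont_pos_functional_def by meson

lemma hilbert: "complex_hilbert shc ip"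
  and lam_add: "lam (a + b) = lam a + lam b"
  and lam_sc: "lam (sc c a) = shc c (lam a)"
  and ip_lam: "ip (lam a) (lam b) = \<omega> (st b * a)"
  and bounded_linear_piw: "bounded_linear (piw a)"
  and piw_shc: "piw a (shc c x) = shc c (piw a x)"
  and piw_lam: "piw a (lam b) = lam (a * b)"
  using gns_triple unfolding gns_def by blast+

lemmas piw_add = linear_add[OF bounded_linear.linear[OF bounded_linear_piw]]

lemma ip_add_left: "ip (x + y) z = ip x z + ip y z"
  and ip_shc_left: "ip (shc c x) y = c * ip x y"
  and ip_cnj: "ip y x = cnj (ip x y)"
  using hilbert unfolding complex_hilbert_def by blast+

lemma range_lam_add: "x \<in> range lam \<Longrightarrow> y \<in> range lam \<Longrightarrow> x + y \<in> range lam"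
  by (auto simp: lam_add[symmetric])

lemma range_lam_shc: "x \<in> range lam \<Longrightarrow> shc c x \<in> range lam"
  by (auto simp: lam_sc[symmetric])

lemma range_lam_piw: "x \<in> range lam \<Longrightarrow> piw a x \<in> range lam"
  by (auto simp: piw_lam)

lemma piw_add_left: "x \<in> range lam \<Longrightarrow> piw (a + b) x = piw a x + piw b x"
  by (auto simp: piw_lam lam_add distrib_right)

lemma piw_sc_left: "x \<in> range lam \<Longrightarrow> piw (sc c a) x = shc c (piw a x)"
  by (auto simp: piw_lam lam_sc sc_mult_left[symmetric])

lemma piw_mult: "x \<in> range lam \<Longrightarrow> piw (a * b) x = piw a (piw b x)"
  by (auto simp: piw_lam mult.assoc)

lemma piw_adjoint: "x \<in> range lam \<Longrightarrow> y \<in> range lam \<Longrightarrow> ip (piw a x) y = ip x (piw (st a) y)"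
  by (auto simp: piw_lam ip_lam st_mult st_st mult.assoc)

lemma Ldag_piw: "Ldag shc ip (range lam) (piw a)"
proof -
  have "is_adj_on ip (range lam) (piw a) (piw (st a))"
    by (auto simp: is_adj_on_def range_lam_piw piw_adjoint)
  moreover have "lin_op_on shc (range lam) (piw a)"
    by (simp add: lin_op_on_def piw_add piw_shc)
  ultimately show ?thesis
    by (auto simp: Ldag_def range_lam_piw)
qed

lemma tendsto_ext_op:
  assumes "\<And>a b. f (a - b) = f a - f b" "\<And>a. nrm (f a) \<le> K * nrm a"
    and "(\<lambda>n. j (A n)) \<longlonglongrightarrow> X"
  shows "(\<lambda>n. j (f (A n))) \<longlonglongrightarrow> ext_op j f X"
  unfolding ext_op_eq_ext_fun
  using _ assms(3)
  by (rule ext_fun_tendsto[where K = K]) (simp add: norm_j_diff assms(1)[symmetric] assms(2))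

lemma tendsto_cq_rmul: "(\<lambda>n. j (A n)) \<longlonglongrightarrow> X \<Longrightarrow> (\<lambda>n. j (A n * b)) \<longlonglongrightarrow> cq_rmul j X b"
  unfolding cq_rmul_def
  by (rule tendsto_ext_op[where K = "norm b"])
    (simp_all add: left_diff_distrib mult.commute[of "norm b"] nrm_mult_right_le)

lemma tendsto_cq_lmul: "(\<lambda>n. j (A n)) \<longlonglongrightarrow> X \<Longrightarrow> (\<lambda>n. j (a * A n)) \<longlonglongrightarrow> cq_lmul j a X"
  unfolding cq_lmul_def
  by (rule tendsto_ext_op[where K = "norm (st a)"]) (auto simp: right_diff_distrib nrm_mult_left_le)

lemma tendsto_cq_star: "(\<lambda>n. j (A n)) \<longlonglongrightarrow> X \<Longrightarrow> (\<lambda>n. j (st (A n))) \<longlonglongrightarrow> cq_star j st X"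
  unfolding cq_star_def
  by (rule tendsto_ext_op[where K = 1]) (simp_all add: additive.diff[OF additive_st] nrm_st)

lemma tendsto_cq_scale: "(\<lambda>n. j (A n)) \<longlonglongrightarrow> X \<Longrightarrow> (\<lambda>n. j (sc c (A n))) \<longlonglongrightarrow> cq_scale j sc c X"
  unfolding cq_scale_def
  by (rule tendsto_ext_op[where K = "cmod c"]) (simp_all add: additive.diff[OF additive_sc] nrm_sc)

lemma matrix_coeff_lipschitz:
  obtains K where "\<And>a a'. norm (ip (piw a (lam b)) (lam c) - ip (piw a' (lam b)) (lam c)) \<le> K * norm (j a - j a')"
proof -
  obtain \<gamma> where "\<gamma> > 0" and \<gamma>: "\<And>a. cmod (\<omega> a) \<le> \<gamma> * nrm a" using \<omega>_bounded by metis
  have "norm (ip (piw a (lam b)) (lam c) - ip (piw a' (lam b)) (lam c)) \<le> \<gamma> * norm c * norm b * norm (j a - j a')"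
    for a a'
  proof -
    have "norm (ip (piw a (lam b)) (lam c) - ip (piw a' (lam b)) (lam c)) = cmod (\<omega> (st c * (a - a') * b))"
      by (simp add: piw_lam ip_lam additive.diff[OF additive_\<omega>, symmetric] algebra_simps)
    also have "\<dots> \<le> \<gamma> * nrm (st c * (a - a') * b)" by (rule \<gamma>)
    also have "\<dots> \<le> \<gamma> * (norm c * nrm (a - a') * norm b)"
    proof (rule mult_left_mono)
      have "nrm (st c * (a - a')) \<le> norm c * nrm (a - a')"
        using nrm_mult_left_le[of "st c" "a - a'"] by (simp add: st_st)
      then show "nrm (st c * (a - a') * b) \<le> norm c * nrm (a - a') * norm b"
        by (meson nrm_mult_right_le mult_right_mono norm_ge_zero order_trans)
    qed (use \<open>\<gamma> > 0\<close> in simp)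
    finally show ?thesis by (simp add: norm_j_diff mult_ac)
  qed
  then show ?thesis by (rule that)
qed

text \<open>gns_rep X \<xi> \<eta> stands for <\<pi>(X)\<xi>, \<eta>>; its values are meaningful only for \<xi>, \<eta> \<in> \<lambda>(A0).\<close>

definition gns_rep :: "'x \<Rightarrow> 'h \<Rightarrow> 'h \<Rightarrow> complex" where
  "gns_rep X \<xi> \<eta> = ext_fun j (\<lambda>a. ip (piw a \<xi>) \<eta>) X"

lemma tendsto_gns_rep:
  assumes "\<xi> \<in> range lam" "\<eta> \<in> range lam" "(\<lambda>n. j (A n)) \<longlonglongrightarrow> X"
  shows "(\<lambda>n. ip (piw (A n) \<xi>) \<eta>) \<longlonglongrightarrow> gns_rep X \<xi> \<eta>"
proof -
  obtain b c where "\<xi> = lam b" "\<eta> = lam c" using assms(1,2) by blast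
  moreover obtain K where
    "\<And>a a'. norm (ip (piw a (lam b)) (lam c) - ip (piw a' (lam b)) (lam c)) \<le> K * norm (j a - j a')"
    using matrix_coeff_lipschitz[of b c] by metis
  ultimately show ?thesis
    unfolding gns_rep_def using assms(3) by (intro ext_fun_tendsto) auto
qed

lemma gns_rep_eqI:
  assumes "\<xi> \<in> range lam" "\<eta> \<in> range lam" "(\<lambda>n. j (A n)) \<longlonglongrightarrow> X"
    and "(\<lambda>n. ip (piw (A n) \<xi>) \<eta>) \<longlonglongrightarrow> y"
  shows "gns_rep X \<xi> \<eta> = y"
  using tendsto_gns_rep[OF assms(1-3)] assms(4) by (rule LIMSEQ_unique)

lemma gns_rep_add_right:
  assumes "\<xi> \<in> range lam" "\<eta> \<in> range lam" "\<eta>' \<in> range lam"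
  shows "gns_rep X \<xi> (\<eta> + \<eta>') = gns_rep X \<xi> \<eta> + gns_rep X \<xi> \<eta>'"
proof -
  obtain A where A: "(\<lambda>n. j (A n)) \<longlonglongrightarrow> X" by (rule approximating_seq)
  show ?thesis
    using assms(1) range_lam_add[OF assms(2,3)] A
  proof (rule gns_rep_eqI)
    show "(\<lambda>n. ip (piw (A n) \<xi>) (\<eta> + \<eta>')) \<longlonglongrightarrow> gns_rep X \<xi> \<eta> + gns_rep X \<xi> \<eta>'"
      unfolding complex_hilbert_ip_add_right[OF hilbert] by (intro tendsto_add tendsto_gns_rep assms A)
  qed
qed

lemma gns_rep_shc_right:
  assumes "\<xi> \<in> range lam" "\<eta> \<in> range lam"
  shows "gns_rep X \<xi> (shc c \<eta>) = cnj c * gns_rep X \<xi> \<eta>"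
proof -
  obtain A where A: "(\<lambda>n. j (A n)) \<longlonglongrightarrow> X" by (rule approximating_seq)
  show ?thesis
    using assms(1) range_lam_shc[OF assms(2)] A
  proof (rule gns_rep_eqI)
    show "(\<lambda>n. ip (piw (A n) \<xi>) (shc c \<eta>)) \<longlonglongrightarrow> cnj c * gns_rep X \<xi> \<eta>"
      unfolding complex_hilbert_ip_scale_right[OF hilbert] by (intro tendsto_mult_left tendsto_gns_rep assms A)
  qed
qed

lemma gns_rep_add_left:
  assumes "\<xi> \<in> range lam" "\<xi>' \<in> range lam" "\<eta> \<in> range lam"
  shows "gns_rep X (\<xi> + \<xi>') \<eta> = gns_rep X \<xi> \<eta> + gns_rep X \<xi>' \<eta>"
proof -
  obtain A where A: "(\<lambda>n. j (A n)) \<longlonglongrightarrow> X" by (rule approximating_seq)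
  show ?thesis
    using range_lam_add[OF assms(1,2)] assms(3) A
  proof (rule gns_rep_eqI)
    show "(\<lambda>n. ip (piw (A n) (\<xi> + \<xi>')) \<eta>) \<longlonglongrightarrow> gns_rep X \<xi> \<eta> + gns_rep X \<xi>' \<eta>"
      unfolding piw_add ip_add_left by (intro tendsto_add tendsto_gns_rep assms A)
  qed
qed

lemma gns_rep_shc_left:
  assumes "\<xi> \<in> range lam" "\<eta> \<in> range lam"
  shows "gns_rep X (shc c \<xi>) \<eta> = c * gns_rep X \<xi> \<eta>"
proof -
  obtain A where A: "(\<lambda>n. j (A n)) \<longlonglongrightarrow> X" by (rule approximating_seq)
  show ?thesis
    using range_lam_shc[OF assms(1)] assms(2) A
  proof (rule gns_rep_eqI)
    show "(\<lambda>n. ip (piw (A n) (shc c \<xi>)) \<eta>) \<longlonglongrightarrow> c * gns_rep X \<xi> \<eta>"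
      unfolding piw_shc ip_shc_left by (intro tendsto_mult_left tendsto_gns_rep assms A)
  qed
qed

lemma gns_rep_add:
  assumes "\<xi> \<in> range lam" "\<eta> \<in> range lam"
  shows "gns_rep (X + Y) \<xi> \<eta> = gns_rep X \<xi> \<eta> + gns_rep Y \<xi> \<eta>"
proof -
  obtain A where A: "(\<lambda>n. j (A n)) \<longlonglongrightarrow> X" by (rule approximating_seq)
  obtain B where B: "(\<lambda>n. j (B n)) \<longlonglongrightarrow> Y" by (rule approximating_seq)
  have AB: "(\<lambda>n. j (A n + B n)) \<longlonglongrightarrow> X + Y"
    unfolding additive.add[OF additive_j] by (intro tendsto_add A B)
  show ?thesis
    using assms AB
  proof (rule gns_rep_eqI)
    show "(\<lambda>n. ip (piw (A n + B n) \<xi>) \<eta>) \<longlonglongrightarrow> gns_rep X \<xi> \<eta> + gns_rep Y \<xi> \<eta>"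
      unfolding piw_add_left[OF assms(1)] ip_add_left by (intro tendsto_add tendsto_gns_rep assms A B)
  qed
qed

lemma gns_rep_cq_scale:
  assumes "\<xi> \<in> range lam" "\<eta> \<in> range lam"
  shows "gns_rep (cq_scale j sc c X) \<xi> \<eta> = c * gns_rep X \<xi> \<eta>"
proof -
  obtain A where A: "(\<lambda>n. j (A n)) \<longlonglongrightarrow> X" by (rule approximating_seq)
  show ?thesis
    using assms tendsto_cq_scale[OF A]
  proof (rule gns_rep_eqI)
    show "(\<lambda>n. ip (piw (sc c (A n)) \<xi>) \<eta>) \<longlonglongrightarrow> c * gns_rep X \<xi> \<eta>"
      unfolding piw_sc_left[OF assms(1)] ip_shc_left by (intro tendsto_mult_left tendsto_gns_rep assms A)
  qed
qed

lemma gns_rep_j: "\<xi> \<in> range lam \<Longrightarrow> \<eta> \<in> range lam \<Longrightarrow> gns_rep (j a) \<xi> \<eta> = ip (piw a \<xi>) \<eta>"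
  by (rule gns_rep_eqI[where A = "\<lambda>n. a"]) simp_all

lemma gns_rep_cq_lmul:
  assumes S: "is_adj_on ip (range lam) (piw a) S" and "\<xi> \<in> range lam" "\<eta> \<in> range lam"
  shows "gns_rep (cq_lmul j a X) \<xi> \<eta> = gns_rep X \<xi> (S \<eta>)"
proof -
  obtain A where A: "(\<lambda>n. j (A n)) \<longlonglongrightarrow> X" by (rule approximating_seq)
  have S\<eta>: "S \<eta> \<in> range lam" and adjoint: "\<And>\<zeta>. \<zeta> \<in> range lam \<Longrightarrow> ip (piw a \<zeta>) \<eta> = ip \<zeta> (S \<eta>)"
    using S assms(3) unfolding is_adj_on_def by blast+
  have moved: "ip (piw (a * A n) \<xi>) \<eta> = ip (piw (A n) \<xi>) (S \<eta>)" for n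
    using adjoint[OF range_lam_piw[OF assms(2)]] by (simp add: piw_mult[OF assms(2)])
  show ?thesis
    using assms(2,3) tendsto_cq_lmul[OF A]
  proof (rule gns_rep_eqI)
    show "(\<lambda>n. ip (piw (a * A n) \<xi>) \<eta>) \<longlonglongrightarrow> gns_rep X \<xi> (S \<eta>)"
      unfolding moved by (intro tendsto_gns_rep assms S\<eta> A)
  qed
qed

lemma gns_rep_cq_rmul:
  assumes "\<xi> \<in> range lam" "\<eta> \<in> range lam"
  shows "gns_rep (cq_rmul j X b) \<xi> \<eta> = gns_rep X (piw b \<xi>) \<eta>"
proof -
  obtain A where A: "(\<lambda>n. j (A n)) \<longlonglongrightarrow> X" by (rule approximating_seq)
  show ?thesis
    using assms tendsto_cq_rmul[OF A]
  proof (rule gns_rep_eqI)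
    show "(\<lambda>n. ip (piw (A n * b) \<xi>) \<eta>) \<longlonglongrightarrow> gns_rep X (piw b \<xi>) \<eta>"
      unfolding piw_mult[OF assms(1)] by (intro tendsto_gns_rep range_lam_piw assms A)
  qed
qed

lemma gns_rep_cq_star:
  assumes "\<xi> \<in> range lam" "\<eta> \<in> range lam"
  shows "gns_rep (cq_star j st X) \<xi> \<eta> = cnj (gns_rep X \<eta> \<xi>)"
proof -
  obtain A where A: "(\<lambda>n. j (A n)) \<longlonglongrightarrow> X" by (rule approximating_seq)
  have adjoint: "ip (piw (st (A n)) \<xi>) \<eta> = cnj (ip (piw (A n) \<eta>) \<xi>)" for n
    using piw_adjoint[OF assms, of "st (A n)"] ip_cnj[of "piw (A n) \<eta>" \<xi>] by (simp add: st_st)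
  show ?thesis
    using assms tendsto_cq_star[OF A]
  proof (rule gns_rep_eqI)
    show "(\<lambda>n. ip (piw (st (A n)) \<xi>) \<eta>) \<longlonglongrightarrow> cnj (gns_rep X \<eta> \<xi>)"
      unfolding adjoint by (intro tendsto_cnj tendsto_gns_rep assms A)
  qed
qed

lemma gns_rep_cq_star_rep: "cq_star_rep sc st j shc ip (range lam) piw gns_rep"
proof -
  have "is_adj_on ip (range lam) (piw a) (dag_op ip (range lam) (piw a))" for a
    using Ldag_piw unfolding Ldag_def by (blast intro: is_adj_on_dag_op)
  then show ?thesis
    unfolding cq_star_rep_def LDv_def conj_lin_on_def eq_on_D_def op_to_LDv_def
      LDv_lmul_def LDv_rmul_def LDv_dag_def
    by (simp add: Ldag_piw gns_rep_add_right gns_rep_shc_right gns_rep_add_left gns_rep_shc_left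
        gns_rep_add gns_rep_cq_scale gns_rep_j gns_rep_cq_lmul gns_rep_cq_rmul gns_rep_cq_star)
qed

end

theorem proposition3p2:
  fixes sc :: "complex \<Rightarrow> 'a::{real_normed_algebra_1,banach} \<Rightarrow> 'a"
    and st :: "'a \<Rightarrow> 'a"
    and nrm :: "'a \<Rightarrow> real"
    and j :: "'a \<Rightarrow> 'x::banach"
    and \<omega> :: "'a \<Rightarrow> complex"
    and shc :: "complex \<Rightarrow> 'h::{real_normed_vector,banach} \<Rightarrow> 'h"
    and ip :: "'h \<Rightarrow> 'h \<Rightarrow> complex"
    and lam :: "'a \<Rightarrow> 'h"
    and piw :: "'a \<Rightarrow> 'h \<Rightarrow> 'h"
  assumes "cstar_algebra sc st"
    and "cq_norm sc st nrm"
    and "is_completion j nrm"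
    and "cont_pos_functional sc st nrm \<omega>"
    and "gns sc st \<omega> shc ip lam piw"
  shows "\<exists>(P :: 'x \<Rightarrow> 'h \<Rightarrow> 'h \<Rightarrow> complex) (L :: 'x \<Rightarrow> 'h \<Rightarrow> complex).
           cq_star_rep sc st j shc ip (range lam) piw P \<and>
           (\<forall>X. conj_lin_on shc (range lam) (L X)) \<and>
           (\<forall>X Y. \<forall>\<eta>\<in>range lam. L (X + Y) \<eta> = L X \<eta> + L Y \<eta>) \<and>
           (\<forall>c X. \<forall>\<eta>\<in>range lam. L (cq_scale j sc c X) \<eta> = c * L X \<eta>) \<and>
           (\<forall>a. \<forall>\<eta>\<in>range lam. L (j a) \<eta> = ip (lam a) \<eta>) \<and>
           (\<forall>X B. \<forall>\<eta>\<in>range lam. L (cq_rmul j X B) \<eta> = P X (lam B) \<eta>)"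
proof -
  interpret cq_gns sc st nrm j \<omega> shc ip lam piw
    using assms by unfold_locales
  have one: "lam 1 \<in> range lam" by simp
  show ?thesis
  proof (intro exI conjI)
    show "cq_star_rep sc st j shc ip (range lam) piw gns_rep"
      by (rule gns_rep_cq_star_rep)
    show "\<forall>X. conj_lin_on shc (range lam) (\<lambda>\<eta>. gns_rep X (lam 1) \<eta>)"
      using one by (simp add: conj_lin_on_def gns_rep_add_right gns_rep_shc_right)
  qed (use one in \<open>simp_all add: gns_rep_add gns_rep_cq_scale gns_rep_j gns_rep_cq_rmul piw_lam\<close>)
qed

end
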